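(* Let $q=2$ and let $C^{\otimes 2}=(\mathbb{G}_a^2,\Phi)$ be the $T$-module with \[\Phi(T)=\begin{pmatrix}T&1\\0&T\end{pmatrix}+\begin{pmatrix}0&0\\1&0\end{pmatrix}\tau.\] Set $t=T^2$ and $\Psi(t)=\Phi(T^2)$, so that $(\mathbb{G}_a^2,\Psi)$ is a $t$-module over $\mathbb{F}_2[t]$. Then the $t$-module $(\mathbb{G}_a^2,\Psi)$ has rank $2$, and its sub-$t$-module $0\times\mathbb{G}_a$ has rank $1$.
   Context: $\tau$ is the Frobenius $z\mapsto z^2$, acting coordinatewise, with $\tau M=M^{(2)}\tau$ for matrices. Explicitly $\Psi(t)=\begin{pmatrix}t&0\\0&t\end{pmatrix}+\begin{pmatrix}1&0\\ \sqrt{t}+t&1\end{pmatrix}\tau$ (here $\sqrt t=T$). A sub-$t$-module is a reduced connected algebraic subgroup stable under $\Psi(t)$. With $\mathcal{F}=\mathbb{F}_2(T)$ the field of coefficients, the rank of a $t$-module (or sub-$t$-module) $\mathcal{B}$ is the rank over $\mathcal{F}[t]$ of $\mathrm{Hom}_{\mathcal{F}}(\mathcal{B},\mathbb{G}_a)$, the $\mathbb{F}_2$-linear algebraic group homomorphisms $\mathcal{B}\to\mathbb{G}_a$ defined over $\mathcal{F}$, which is an $\mathcal{F}[t]$-module via left multiplication by $\mathcal{F}$ and $t\cdot f=f\circ\Psi(t)$. *)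

theory Defs
  imports "HOL-Library.Z2" "HOL-Library.Product_Plus" "HOL-Computational_Algebra.Polynomial" "HOL-Computational_Algebra.Fraction_Field"
begin

type_synonym F = "bit poly fract"

definition TT :: F where "TT = Fract [:0, 1:] 1"

definition tt :: F where "tt = TT ^ 2"

text \<open>Psi(t) acting on F-points of G_a^2:
  Psi(t)(x,y) = t (x,y) + [[1,0],[sqrt t + t, 1]] (x^2, y^2).\<close>
definition Psi :: "F \<times> F \<Rightarrow> F \<times> F" where
  "Psi z = (tt * fst z + (fst z) ^ 2,
            tt * snd z + (TT + tt) * (fst z) ^ 2 + (snd z) ^ 2)"

definition poly_fun2 :: "(F \<times> F \<Rightarrow> F) \<Rightarrow> bool" where
  "poly_fun2 f \<longleftrightarrow> (\<exists>(c :: nat \<Rightarrow> nat \<Rightarrow> F) N.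
      \<forall>x y. f (x, y) = (\<Sum>i\<le>N. \<Sum>j\<le>N. c i j * x ^ i * y ^ j))"

text \<open>Hom_F(B, G_a): F_2-linear (= additive, as char = 2) algebraic group homomorphisms
  B -> G_a defined over F, for an algebraic subgroup B of G_a^2, viewed as functions on B
  (only values on B matter).\<close>
definition Hom_Ga :: "(F \<times> F) set \<Rightarrow> (F \<times> F \<Rightarrow> F) set" where
  "Hom_Ga B = {f. poly_fun2 f \<and> (\<forall>u\<in>B. \<forall>v\<in>B. f (u + v) = f u + f v)}"

text \<open>F[t]-action on homomorphisms: F by left multiplication, t by f \<mapsto> f \<circ> psi.\<close>
definition tact :: "('a \<Rightarrow> 'a) \<Rightarrow> F poly \<Rightarrow> ('a \<Rightarrow> F) \<Rightarrow> 'a \<Rightarrow> F" where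
  "tact psi p f = (\<lambda>z. \<Sum>k\<le>degree p. coeff p k * f ((psi ^^ k) z))"

definition tindep :: "'a set \<Rightarrow> ('a \<Rightarrow> 'a) \<Rightarrow> ('a \<Rightarrow> F) set \<Rightarrow> bool" where
  "tindep B psi S \<longleftrightarrow> (\<forall>c :: ('a \<Rightarrow> F) \<Rightarrow> F poly.
      (\<forall>z\<in>B. (\<Sum>s\<in>S. tact psi (c s) s z) = 0) \<longrightarrow> (\<forall>s\<in>S. c s = 0))"

definition has_trank :: "'a set \<Rightarrow> ('a \<Rightarrow> 'a) \<Rightarrow> ('a \<Rightarrow> F) set \<Rightarrow> nat \<Rightarrow> bool" where
  "has_trank B psi M r \<longleftrightarrow>
     (\<exists>S. S \<subseteq> M \<and> finite S \<and> card S = r \<and> tindep B psi S) \<and>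
     (\<forall>S. S \<subseteq> M \<and> finite S \<and> tindep B psi S \<longrightarrow> card S \<le> r)"

end

theory Submission
  imports Defs "HOL-Library.Function_Algebras"
begin

text \<open>
  In characteristic 2 every additive polynomial is a linear combination of Frobenius powers
  \<open>x ^ 2 ^ i\<close>, so a homomorphism \<open>G_a^2 \<rightarrow> G_a\<close> lies in the span of the \<open>x ^ 2 ^ i\<close> and
  \<open>y ^ 2 ^ i\<close> with \<open>i \<le> m\<close>, and composing with \<open>\<Psi>(t)\<close> raises \<open>m\<close> by one. For an
  \<open>F[t]\<close>-independent set \<open>S\<close> the shifts \<open>f \<circ> \<Psi>(t)^k\<close> (\<open>f \<in> S\<close>, \<open>k \<le> K\<close>) are
  \<open>F\<close>-independent, yet they lie in a space of dimension \<open>2 (m + K + 1)\<close>; letting \<open>K\<close> grow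
  gives \<open>|S| \<le> 2\<close>, and \<open>|S| \<le> 1\<close> on \<open>0 \<times> G_a\<close>, where only the \<open>y ^ 2 ^ i\<close> survive.
  Conversely \<open>x\<close> and \<open>y\<close> are independent: on the first coordinate, and on \<open>0 \<times> G_a\<close>,
  \<open>\<Psi>(t)\<close> acts by \<open>\<phi>(x) = t x + x^2\<close>, whose iterates have the distinct degrees \<open>2^k\<close>.
\<close>

section \<open>Characteristic two\<close>

lemma add_self_char2:
  fixes x :: "'a::semiring_1"
  assumes "(2::'a) = 0"
  shows "x + x = 0"
  by (metis assms mult_2 mult_zero_left)

lemma power2_add_char2:
  fixes x y :: "'a::comm_semiring_1"
  assumes "(2::'a) = 0"
  shows "(x + y) ^ 2 = x ^ 2 + y ^ 2"
  by (simp add: power2_sum assms)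

lemma power_two_power_add_char2:
  fixes x y :: "'a::comm_semiring_1"
  assumes two: "(2::'a) = 0"
  shows "(x + y) ^ 2 ^ i = x ^ 2 ^ i + y ^ 2 ^ i"
proof (induction i)
  case (Suc i)
  have "(x + y) ^ 2 ^ Suc i = ((x + y) ^ 2 ^ i) ^ 2"
    by (simp add: power_mult[symmetric] mult.commute)
  also have "\<dots> = (x ^ 2 ^ i) ^ 2 + (y ^ 2 ^ i) ^ 2"
    by (simp add: Suc power2_add_char2[OF two])
  finally show ?case by (simp add: power_mult[symmetric] mult.commute)
qed simp

lemma of_nat_char2:
  assumes "(2::'a::semiring_1) = 0"
  shows "(of_nat n :: 'a) = (if even n then 0 else 1)"
  by (induction n) (auto simp: add_self_char2[OF assms])

lemma inj_power2_char2:
  assumes two: "(2::'a::idom) = 0"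
  shows "inj (\<lambda>x::'a. x ^ 2)"
proof (rule injI)
  fix x y :: 'a
  assume "x ^ 2 = y ^ 2"
  then have "(x + y) ^ 2 = 0" by (simp add: power2_add_char2[OF two] add_self_char2[OF two])
  then show "x = y" by (metis add_self_char2[OF two] add_right_imp_eq power_eq_0_iff)
qed

lemma two_eq_zero_F: "(2::F) = 0"
proof -
  have "(2::bit poly) = 0"
    by (metis bit_2_eq_0 of_nat_numeral of_nat_poly pCons_0_0)
  then show ?thesis
    by (metis Fract_of_nat_eq of_nat_numeral Zero_fract_def)
qed

lemma infinite_UNIV_F: "infinite (UNIV :: F set)"
proof -
  have "inj (\<lambda>n. Fract (monom (1::bit) n) 1)"
    by (rule injI) (metis eq_fract(1) coeff_monom mult_1_right one_neq_zero)
  then show ?thesis using infinite_UNIV_nat by (metis finite_imageD finite_subset top_greatest)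
qed

section \<open>Polynomials over infinite domains\<close>

lemma poly_eq_0_if_infinite_roots:
  fixes p :: "'a::idom poly"
  assumes "infinite A" and "\<And>x. x \<in> A \<Longrightarrow> poly p x = 0"
  shows "p = 0"
proof (rule ccontr)
  assume "p \<noteq> 0"
  then have "finite {x. poly p x = 0}" by (rule poly_roots_finite)
  moreover have "A \<subseteq> {x. poly p x = 0}" using assms(2) by blast
  ultimately show False using assms(1) finite_subset by blast
qed

text \<open>With one argument fixed in \<open>A\<close> the additivity identity is polynomial in the other, so
  it extends from the infinite set \<open>A\<close> to all of \<open>'a\<close>; doing this twice frees both arguments.\<close>
lemma additive_poly_if_additive_on_infinite:
  fixes p :: "'a::idom poly"
  assumes inf: "infinite A"
    and add: "\<And>u v. u \<in> A \<Longrightarrow> v \<in> A \<Longrightarrow> poly p (u + v) = poly p u + poly p v"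
  shows "additive (poly p)"
proof
  have shift: "poly p (u + v) = poly p u + poly p v" if "v \<in> A" for u v
  proof -
    have "pcompose p [:v, 1:] - p - [:poly p v:] = 0"
      by (rule poly_eq_0_if_infinite_roots[OF inf])
        (use add that in \<open>simp add: poly_pcompose add.commute\<close>)
    from arg_cong[OF this, of "\<lambda>q. poly q u"] show ?thesis
      by (simp add: poly_pcompose add.commute diff_eq_eq)
  qed
  fix u v
  have "pcompose p [:u, 1:] - [:poly p u:] - p = 0"
    by (rule poly_eq_0_if_infinite_roots[OF inf]) (simp add: shift poly_pcompose)
  from arg_cong[OF this, of "\<lambda>q. poly q v"] show "poly p (u + v) = poly p u + poly p v"
    by (simp add: poly_pcompose add.commute diff_eq_eq)
qed

lemma pderiv_eq_const_if_additive:
  fixes p :: "'a::idom poly"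
  assumes inf: "infinite (UNIV :: 'a set)" and add: "additive (poly p)"
  shows "pderiv p = [:poly (pderiv p) 0:]"
proof -
  have "pcompose p [:b, 1:] = p + [:poly p b:]" for b
    using poly_eq_0_if_infinite_roots[OF inf, of "pcompose p [:b, 1:] - (p + [:poly p b:])"]
    by (simp add: poly_pcompose additive.add[OF add] add.commute)
  then have "pderiv (pcompose p [:b, 1:]) = pderiv p" for b
    by (simp add: pderiv_add pderiv_pCons)
  then have "pcompose (pderiv p) [:b, 1:] = pderiv p" for b
    by (simp add: pderiv_pcompose pderiv_pCons)
  then have "poly (pderiv p) b = poly (pderiv p) 0" for b
    using poly_pcompose[of "pderiv p" "[:b, 1:]" 0] by simp
  then show ?thesis
    using poly_eq_0_if_infinite_roots[OF inf, of "pderiv p - [:poly (pderiv p) 0:]"] by simp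
qed

lemma coeff_even_part:
  fixes p :: "'a::comm_semiring_1 poly"
  shows "coeff (\<Sum>m\<le>degree p. monom (coeff p (2 * m)) (2 * m)) n
    = (if even n then coeff p n else 0)"
proof (cases "even n")
  case True
  then obtain k where k: "n = 2 * k" by blast
  have "coeff (\<Sum>m\<le>degree p. monom (coeff p (2 * m)) (2 * m)) n
      = (\<Sum>m\<le>degree p. if m = k then coeff p n else 0)"
    unfolding coeff_sum coeff_monom by (rule sum.cong) (auto simp: k)
  also have "\<dots> = coeff p n"
    using k by (auto intro: coeff_eq_0)
  finally show ?thesis using True by simp
qed (auto simp: coeff_sum coeff_monom intro!: sum.neutral)

text \<open>The coefficient of \<open>x ^ k\<close> in the constant polynomial \<open>p'\<close> is \<open>(k + 1) \<cdot> coeff p (k + 1)\<close>,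
  and \<open>k + 1 = 1\<close> in characteristic 2 when \<open>k\<close> is even.\<close>
lemma coeff_odd_eq_0_if_additive_char2:
  fixes p :: "'a::idom poly"
  assumes two: "(2::'a) = 0" and inf: "infinite (UNIV :: 'a set)"
    and add: "additive (poly p)" and n: "odd n" "n \<ge> 3"
  shows "coeff p n = 0"
proof -
  obtain k where k: "n = Suc k" using n(2) by (cases n) auto
  with n have "even k" "k \<noteq> 0" by auto
  have "coeff (pderiv p) k = 0"
    using \<open>k \<noteq> 0\<close> by (subst pderiv_eq_const_if_additive[OF inf add]) (cases k, auto)
  then show ?thesis using k \<open>even k\<close> by (simp add: coeff_pderiv of_nat_char2[OF two])
qed

lemma additive_poly_char2_decompose:
  fixes p :: "'a::idom poly"
  assumes two: "(2::'a) = 0" and inf: "infinite (UNIV :: 'a set)"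
    and add: "additive (poly p)" and deg: "degree p \<noteq> 0"
  shows "\<exists>h. degree h < degree p \<and> additive (poly h)
    \<and> (\<forall>x. poly p x = coeff p 1 * x + poly h (x ^ 2))"
proof -
  define h where "h = (\<Sum>m\<le>degree p. monom (coeff p (2 * m)) m)"
  define H where "H = (\<Sum>m\<le>degree p. monom (coeff p (2 * m)) (2 * m))"
  have p_split: "p = monom (coeff p 1) 1 + H"
  proof (rule poly_eqI)
    fix n :: nat
    have "n = 1 \<or> even n \<or> odd n \<and> n \<ge> 3" by presburger
    then have "coeff p n = (if n = 1 then coeff p 1 else 0) + (if even n then coeff p n else 0)"
      using coeff_odd_eq_0_if_additive_char2[OF two inf add] by auto
    then show "coeff p n = coeff (monom (coeff p 1) 1 + H) n"
      unfolding H_def coeff_add coeff_even_part by (auto simp: coeff_monom)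
  qed
  have "poly H x = poly h (x ^ 2)" for x
    by (simp add: H_def h_def poly_sum poly_monom power_mult)
  then have p_eq: "poly p x = coeff p 1 * x + poly h (x ^ 2)" for x
    by (subst p_split) (simp add: poly_monom)
  have "degree h \<le> degree p div 2"
  proof (rule degree_le, intro allI impI)
    fix i assume "degree p div 2 < i"
    then have "coeff p (2 * i) = 0" by (intro coeff_eq_0) linarith
    then show "coeff h i = 0" by (simp add: h_def coeff_sum coeff_monom)
  qed
  then have "degree h < degree p" using deg by linarith
  moreover have "additive (poly h)"
  proof (rule additive_poly_if_additive_on_infinite)
    show "infinite (range (\<lambda>x::'a. x ^ 2))"
      using inf inj_power2_char2[OF two] finite_imageD by blast
    fix u v assume "u \<in> range (\<lambda>x::'a. x ^ 2)" "v \<in> range (\<lambda>x::'a. x ^ 2)"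
    then obtain x y where "u = x ^ 2" "v = y ^ 2" by auto
    then show "poly h (u + v) = poly h u + poly h v"
      using p_eq[of "x + y"] p_eq[of x] p_eq[of y] additive.add[OF add, of x y]
      by (simp add: power2_add_char2[OF two] algebra_simps)
  qed
  ultimately show ?thesis using p_eq by blast
qed

lemma additive_poly_char2_eq_sum_frobenius:
  fixes p :: "'a::idom poly"
  assumes two: "(2::'a) = 0" and inf: "infinite (UNIV :: 'a set)" and add: "additive (poly p)"
  shows "\<exists>m a. \<forall>x. poly p x = (\<Sum>i\<le>m. a i * x ^ 2 ^ i)"
  using add
proof (induction "degree p" arbitrary: p rule: less_induct)
  case less
  show ?case
  proof (cases "degree p = 0")
    case True
    then have "p = [:poly p 0:]" by (metis degree_0_id poly_0_coeff_0)
    then have "p = 0" using additive.zero[OF less.prems] by simp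
    then show ?thesis by (intro exI[of _ 0] exI[of _ "\<lambda>_. 0"]) simp
  next
    case False
    obtain h where h: "degree h < degree p" "additive (poly h)"
      and p_eq: "\<forall>x. poly p x = coeff p 1 * x + poly h (x ^ 2)"
      using additive_poly_char2_decompose[OF two inf less.prems False] by blast
    obtain m a where h_eq: "\<forall>x. poly h x = (\<Sum>i\<le>m. a i * x ^ 2 ^ i)"
      using less.hyps[OF h] by blast
    have "poly p x = (\<Sum>i\<le>Suc m. case_nat (coeff p 1) a i * x ^ 2 ^ i)" for x
    proof -
      have "poly p x = coeff p 1 * x + (\<Sum>i\<le>m. a i * x ^ 2 ^ Suc i)"
        using p_eq h_eq by (simp add: power_mult[symmetric] mult.commute)
      also have "\<dots> = (\<Sum>i\<le>Suc m. case_nat (coeff p 1) a i * x ^ 2 ^ i)"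
        by (subst sum.atMost_Suc_shift) simp
      finally show ?thesis .
    qed
    then show ?thesis by blast
  qed
qed

text \<open>The \<open>k\<close>-th iterate has degree \<open>(degree P) ^ k\<close>; these degrees are distinct, so the
  coefficient of \<open>x ^ (degree P) ^ d\<close> in the combination comes from the top term alone.\<close>
lemma funpow_poly_linearly_independent:
  fixes P c :: "'a::idom poly"
  assumes inf: "infinite (UNIV :: 'a set)" and deg: "degree P \<ge> 2"
    and rel: "\<forall>x. (\<Sum>k\<le>degree c. coeff c k * (poly P ^^ k) x) = 0"
  shows "c = 0"
proof (rule ccontr)
  assume "c \<noteq> 0"
  define Q where "Q k = (pcompose P ^^ k) [:0, 1:]" for k
  have poly_Q: "poly (Q k) = poly P ^^ k" for k
    by (induction k) (auto simp: Q_def poly_pcompose)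
  have degree_Q: "degree (Q k) = degree P ^ k" for k
    by (induction k) (simp_all add: Q_def degree_pcompose)
  define d where "d = degree c"
  define R where "R = (\<Sum>k\<le>d. smult (coeff c k) (Q k))"
  have "R = 0"
    using rel by (intro poly_eq_0_if_infinite_roots[OF inf]) (simp_all add: R_def d_def poly_sum poly_Q)
  have "coeff (Q k) (degree P ^ d) = 0" if "k \<in> {..d} - {d}" for k
  proof (rule coeff_eq_0)
    show "degree (Q k) < degree P ^ d"
      using that deg by (simp add: degree_Q power_strict_increasing)
  qed
  then have "coeff R (degree P ^ d) = (\<Sum>k\<in>{d}. coeff c k * coeff (Q k) (degree P ^ d))"
    unfolding R_def coeff_sum coeff_smult by (intro sum.mono_neutral_right) auto
  then have "coeff R (degree P ^ d) = coeff c d * lead_coeff (Q d)"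
    by (simp add: degree_Q)
  moreover have "Q d \<noteq> 0"
    using deg degree_Q[of d] by (metis degree_0 not_numeral_le_zero power_not_zero)
  ultimately show False
    using \<open>R = 0\<close> \<open>c \<noteq> 0\<close> by (simp add: d_def)
qed

section \<open>Spans of function families\<close>

definition scale_fun :: "'a::field \<Rightarrow> ('b \<Rightarrow> 'a) \<Rightarrow> 'b \<Rightarrow> 'a" where
  "scale_fun c f = (\<lambda>z. c * f z)"

interpretation fun_space: vector_space "scale_fun :: 'a::field \<Rightarrow> ('b \<Rightarrow> 'a) \<Rightarrow> 'b \<Rightarrow> 'a"
  by unfold_locales (auto simp: scale_fun_def fun_eq_iff algebra_simps)

lemma sum_fun_apply: "(\<Sum>v\<in>A. f v) z = (\<Sum>v\<in>A. f v z)"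
  by (induction A rule: infinite_finite_induct) auto

lemma lincomb_in_span:
  fixes X :: "nat \<Rightarrow> 'b \<Rightarrow> 'a::field"
  assumes "\<And>i. i \<le> m \<Longrightarrow> X i \<in> G"
  shows "(\<lambda>z. \<Sum>i\<le>m. a i * X i z) \<in> fun_space.span G"
proof -
  have "(\<lambda>z. \<Sum>i\<le>m. a i * X i z) = (\<Sum>i\<le>m. scale_fun (a i) (X i))"
    by (simp add: fun_eq_iff sum_fun_apply scale_fun_def)
  also have "\<dots> \<in> fun_space.span G"
    by (intro fun_space.span_sum fun_space.span_scale fun_space.span_base assms) simp
  finally show ?thesis .
qed

lemma span_comp_right:
  fixes G :: "('a \<Rightarrow> 'c::field) set" and G' :: "('b \<Rightarrow> 'c) set" and \<phi> :: "'b \<Rightarrow> 'a"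
  assumes gen: "\<And>h. h \<in> G \<Longrightarrow> h \<circ> \<phi> \<in> fun_space.span G'" and f: "f \<in> fun_space.span G"
  shows "f \<circ> \<phi> \<in> fun_space.span G'"
  using f
proof (induction rule: fun_space.span_induct_alt)
  case base
  have "(0 :: 'a \<Rightarrow> 'c) \<circ> \<phi> = 0" by (simp add: fun_eq_iff)
  then show ?case by (simp only: fun_space.span_zero)
next
  case (step c h g)
  have "(scale_fun c h + g) \<circ> \<phi> = scale_fun c (h \<circ> \<phi>) + (g \<circ> \<phi>)"
    by (simp add: fun_eq_iff scale_fun_def)
  then show ?case
    using step gen by (metis fun_space.span_add fun_space.span_scale)
qed

lemma span_comp_funpow:
  fixes G :: "nat \<Rightarrow> ('a \<Rightarrow> 'c::field) set"
  assumes step: "\<And>m h. h \<in> G m \<Longrightarrow> h \<circ> \<phi> \<in> fun_space.span (G (Suc m))"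
  shows "f \<in> fun_space.span (G m) \<Longrightarrow> f \<circ> (\<phi> ^^ k) \<in> fun_space.span (G (m + k))"
proof (induction k arbitrary: f m)
  case (Suc k)
  have "f \<circ> \<phi> \<in> fun_space.span (G (Suc m))" by (rule span_comp_right[OF step Suc.prems])
  then have "(f \<circ> \<phi>) \<circ> (\<phi> ^^ k) \<in> fun_space.span (G (Suc m + k))" by (rule Suc.IH)
  then show ?case by (simp add: comp_def)
qed simp

lemma span_family_nontrivial_relation:
  fixes g :: "'i \<Rightarrow> 'b \<Rightarrow> 'a::field"
  assumes I: "finite I" and G: "finite G" and card: "card G < card I"
    and span: "\<And>i. i \<in> I \<Longrightarrow> g i \<in> fun_space.span G"
  shows "\<exists>a. (\<forall>z. (\<Sum>i\<in>I. a i * g i z) = 0) \<and> (\<exists>i\<in>I. a i \<noteq> 0)"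
proof (cases "inj_on g I")
  case True
  have "g ` I \<subseteq> fun_space.span G" using span by blast
  moreover have "card (g ` I) = card I" using True by (rule card_image)
  ultimately have "fun_space.dependent (g ` I)"
    using fun_space.independent_span_bound[OF G] card by (metis not_le)
  then obtain u where u: "\<exists>v\<in>g ` I. u v \<noteq> 0" "(\<Sum>v\<in>g ` I. scale_fun (u v) v) = 0"
    using fun_space.dependent_finite[of "g ` I"] I by blast
  have "(\<Sum>i\<in>I. u (g i) * g i z) = 0" for z
  proof -
    have "(\<Sum>i\<in>I. u (g i) * g i z) = (\<Sum>v\<in>g ` I. u v * v z)"
      by (rule sum.reindex[OF True, symmetric, unfolded comp_def])
    also have "\<dots> = (\<Sum>v\<in>g ` I. scale_fun (u v) v) z" by (simp add: sum_fun_apply scale_fun_def)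
    finally show ?thesis using u(2) by simp
  qed
  moreover have "\<exists>i\<in>I. u (g i) \<noteq> 0" using u(1) by blast
  ultimately show ?thesis by (intro exI[of _ "\<lambda>i. u (g i)"]) blast
next
  case False
  then obtain i j where ij: "i \<in> I" "j \<in> I" "i \<noteq> j" "g i = g j"
    by (auto simp: inj_on_def)
  define a :: "'i \<Rightarrow> 'a" where "a k = (if k = i then 1 else if k = j then -1 else 0)" for k
  have "(\<Sum>k\<in>I. a k * g k z) = 0" for z
  proof -
    have "(\<Sum>k\<in>I. a k * g k z)
        = (\<Sum>k\<in>I. if k = i then g i z else 0) - (\<Sum>k\<in>I. if k = j then g j z else 0)"
    proof -
      have "a k * g k z = (if k = i then g i z else 0) - (if k = j then g j z else 0)" for k
        using ij(3,4) by (simp add: a_def)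
      then show ?thesis by (simp add: sum_subtractf[symmetric])
    qed
    then show ?thesis using ij I by simp
  qed
  moreover have "a i \<noteq> 0" by (simp add: a_def)
  ultimately show ?thesis using ij(1) by blast
qed

section \<open>Bounding the rank\<close>

lemma tindep_shifts_independent:
  assumes ind: "tindep B psi S"
    and rel: "\<forall>z\<in>B. (\<Sum>s\<in>S. \<Sum>k\<le>K. a (s, k) * s ((psi ^^ k) z)) = 0"
  shows "\<forall>s\<in>S. \<forall>k\<le>K. a (s, k) = 0"
proof -
  define c where "c s = (\<Sum>k\<le>K. monom (a (s, k)) k)" for s
  have coeff_c: "coeff (c s) k = (if k \<le> K then a (s, k) else 0)" for s k
    by (simp add: c_def coeff_sum coeff_monom)
  have "degree (c s) \<le> K" for s
    by (rule degree_le) (simp add: coeff_c)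
  then have "tact psi (c s) s z = (\<Sum>k\<le>K. coeff (c s) k * s ((psi ^^ k) z))" for s z
    unfolding tact_def by (intro sum.mono_neutral_left) (auto simp: coeff_eq_0)
  then have "tact psi (c s) s z = (\<Sum>k\<le>K. a (s, k) * s ((psi ^^ k) z))" for s z
    by (simp add: coeff_c)
  then have "\<forall>s\<in>S. c s = 0"
    using ind rel unfolding tindep_def by simp
  then show ?thesis by (metis coeff_c coeff_0)
qed

text \<open>The shifts \<open>s \<circ> psi ^^ k\<close> (\<open>s \<in> S\<close>, \<open>k \<le> K\<close>) are \<open>F\<close>-independent, but they lie in a
  space of dimension at most \<open>r (M + K + 1)\<close>; for \<open>K = r M\<close> this is less than \<open>(r + 1)(K + 1)\<close>.\<close>
lemma tindep_card_le:
  fixes S :: "('a \<Rightarrow> F) set" and G :: "nat \<Rightarrow> ('b \<Rightarrow> F) set" and j :: "'b \<Rightarrow> 'a"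
  assumes S: "finite S" and ind: "tindep (range j) psi S"
    and G_finite: "\<And>m. finite (G m)" and G_card: "\<And>m. card (G m) \<le> r * (m + 1)"
    and G_mono: "mono G"
    and shifts: "\<And>s. s \<in> S \<Longrightarrow> \<exists>m. \<forall>k. s \<circ> (psi ^^ k) \<circ> j \<in> fun_space.span (G (m + k))"
  shows "card S \<le> r"
proof (rule ccontr)
  assume "\<not> card S \<le> r"
  then have card_S: "r + 1 \<le> card S" by simp
  obtain ms where ms: "\<And>s k. s \<in> S \<Longrightarrow> s \<circ> (psi ^^ k) \<circ> j \<in> fun_space.span (G (ms s + k))"
    using shifts by metis
  define M where "M = Max (ms ` S)"
  define K where "K = r * M"
  define I where "I = S \<times> {..K}"
  define g :: "('a \<Rightarrow> F) \<times> nat \<Rightarrow> 'b \<Rightarrow> F" where "g = (\<lambda>(s, k). s \<circ> (psi ^^ k) \<circ> j)"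
  have "card (G (M + K)) \<le> r * (M + K + 1)" by (rule G_card)
  also have "\<dots> < (r + 1) * (K + 1)" by (simp add: K_def algebra_simps)
  also have "\<dots> \<le> card S * (K + 1)" by (rule mult_le_mono1[OF card_S])
  also have "\<dots> = card I" by (simp add: I_def card_cartesian_product)
  finally have card_lt: "card (G (M + K)) < card I" .
  have g_span: "g i \<in> fun_space.span (G (M + K))" if "i \<in> I" for i
  proof -
    obtain s k where i: "i = (s, k)" "s \<in> S" "k \<le> K" using \<open>i \<in> I\<close> by (auto simp: I_def)
    have "ms s + k \<le> M + K" using i S by (simp add: M_def add_mono)
    then show ?thesis
      using ms[OF i(2), of k] fun_space.span_mono[OF monoD[OF G_mono]] i(1) by (auto simp: g_def)
  qed
  moreover have "finite I" using S by (simp add: I_def)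
  ultimately obtain a where rel: "\<forall>z. (\<Sum>i\<in>I. a i * g i z) = 0" and nontriv: "\<exists>i\<in>I. a i \<noteq> 0"
    using span_family_nontrivial_relation[of I "G (M + K)" g] G_finite card_lt by blast
  have "\<forall>z\<in>range j. (\<Sum>s\<in>S. \<Sum>k\<le>K. a (s, k) * s ((psi ^^ k) z)) = 0"
    using rel by (auto simp: I_def g_def sum.cartesian_product case_prod_beta')
  then show False
    using tindep_shifts_independent[OF ind] nontriv by (auto simp: I_def)
qed

lemma has_trankI:
  assumes "S \<subseteq> M" "finite S" "card S = r" "tindep B psi S"
    and "\<And>S'. S' \<subseteq> M \<Longrightarrow> finite S' \<Longrightarrow> tindep B psi S' \<Longrightarrow> card S' \<le> r"
  shows "has_trank B psi M r"
  using assms unfolding has_trank_def by blast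

section \<open>The \<open>t\<close>-module \<open>\<Psi>\<close>\<close>

definition phi :: "F \<Rightarrow> F" where
  "phi x = tt * x + x ^ 2"

lemma phi_eq_poly: "phi = poly [:0, tt, 1:]"
  by (simp add: fun_eq_iff phi_def power2_eq_square algebra_simps)

lemma fst_funpow_Psi: "fst ((Psi ^^ k) z) = (phi ^^ k) (fst z)"
  by (induction k) (auto simp: Psi_def phi_def)

lemma funpow_Psi_zero_left: "(Psi ^^ k) (0, y) = (0, (phi ^^ k) y)"
  by (induction k) (auto simp: Psi_def phi_def)

lemma phi_iterates_linearly_independent:
  assumes "\<forall>x. (\<Sum>k\<le>degree c. coeff c k * (phi ^^ k) x) = 0"
  shows "c = 0"
  using funpow_poly_linearly_independent[OF infinite_UNIV_F, of "[:0, tt, 1:]" c] assms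
  by (simp add: phi_eq_poly)

lemma fst_in_Hom_Ga: "fst \<in> Hom_Ga B"
  unfolding Hom_Ga_def poly_fun2_def
  by (auto intro!: exI[of _ 1] exI[of _ "\<lambda>i j. if i = 1 \<and> j = 0 then 1 else 0"] simp: atMost_Suc)

lemma snd_in_Hom_Ga: "snd \<in> Hom_Ga B"
  unfolding Hom_Ga_def poly_fun2_def
  by (auto intro!: exI[of _ 1] exI[of _ "\<lambda>i j. if i = 0 \<and> j = 1 then 1 else 0"] simp: atMost_Suc)

lemma fst_ne_snd: "(fst :: F \<times> F \<Rightarrow> F) \<noteq> snd"
  by (metis fst_conv snd_conv zero_neq_one)

lemma tindep_fst_snd: "tindep UNIV Psi {fst, snd}"
  unfolding tindep_def
proof (intro allI impI)
  fix c :: "(F \<times> F \<Rightarrow> F) \<Rightarrow> F poly"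
  assume rel0: "\<forall>z\<in>UNIV. (\<Sum>s\<in>{fst, snd}. tact Psi (c s) s z) = 0"
  have rel: "tact Psi (c fst) fst z + tact Psi (c snd) snd z = 0" for z
    using rel0[rule_format, of z] fst_ne_snd by simp
  have "c snd = 0"
    using rel[of "(0, _)"] by (intro phi_iterates_linearly_independent)
      (simp add: tact_def funpow_Psi_zero_left)
  moreover have "c fst = 0"
    using rel[of "(_, 0)"] \<open>c snd = 0\<close> by (intro phi_iterates_linearly_independent)
      (simp add: tact_def fst_funpow_Psi)
  ultimately show "\<forall>s\<in>{fst, snd}. c s = 0" by simp
qed

lemma tindep_snd: "tindep ({0} \<times> UNIV) Psi {snd}"
  unfolding tindep_def
proof (intro allI impI)
  fix c :: "(F \<times> F \<Rightarrow> F) \<Rightarrow> F poly"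
  assume "\<forall>z\<in>{0} \<times> UNIV. (\<Sum>s\<in>{snd}. tact Psi (c s) s z) = 0"
  then have "c snd = 0"
    by (intro phi_iterates_linearly_independent) (auto simp: tact_def funpow_Psi_zero_left)
  then show "\<forall>s\<in>{snd}. c s = 0" by simp
qed

definition frobenius_powers :: "nat \<Rightarrow> (F \<Rightarrow> F) set" where
  "frobenius_powers m = (\<lambda>i x. x ^ 2 ^ i) ` {..m}"

definition frobenius_powers2 :: "nat \<Rightarrow> (F \<times> F \<Rightarrow> F) set" where
  "frobenius_powers2 m = (\<lambda>h. h \<circ> fst) ` frobenius_powers m \<union> (\<lambda>h. h \<circ> snd) ` frobenius_powers m"

lemma finite_frobenius_powers: "finite (frobenius_powers m)"
  by (simp add: frobenius_powers_def)

lemma finite_frobenius_powers2: "finite (frobenius_powers2 m)"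
  by (simp add: frobenius_powers2_def finite_frobenius_powers)

lemma card_frobenius_powers: "card (frobenius_powers m) \<le> m + 1"
  unfolding frobenius_powers_def using card_image_le[of "{..m}"] by simp

lemma card_frobenius_powers2: "card (frobenius_powers2 m) \<le> 2 * (m + 1)"
proof -
  have "card (frobenius_powers2 m)
      \<le> card ((\<lambda>h. h \<circ> (fst :: F \<times> F \<Rightarrow> F)) ` frobenius_powers m)
        + card ((\<lambda>h. h \<circ> (snd :: F \<times> F \<Rightarrow> F)) ` frobenius_powers m)"
    unfolding frobenius_powers2_def by (rule card_Un_le)
  also have "\<dots> \<le> card (frobenius_powers m) + card (frobenius_powers m)"
    by (intro add_mono card_image_le finite_frobenius_powers)
  also have "\<dots> \<le> (m + 1) + (m + 1)"
    by (intro add_mono card_frobenius_powers)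
  finally show ?thesis by simp
qed

lemma mono_frobenius_powers: "mono frobenius_powers"
  by (auto simp: mono_def frobenius_powers_def)

lemma mono_frobenius_powers2: "mono frobenius_powers2"
  using mono_frobenius_powers by (fastforce simp: mono_def frobenius_powers2_def)

lemma frobenius_power_comp_phi:
  "(\<lambda>x. x ^ 2 ^ i) \<circ> phi = scale_fun (tt ^ 2 ^ i) (\<lambda>x. x ^ 2 ^ i) + (\<lambda>x. x ^ 2 ^ Suc i)"
  by (simp add: fun_eq_iff phi_def scale_fun_def power_two_power_add_char2[OF two_eq_zero_F]
      power_mult_distrib power_mult[symmetric] mult.commute)

lemma frobenius_powers_comp_phi:
  assumes "h \<in> frobenius_powers m"
  shows "h \<circ> phi \<in> fun_space.span (frobenius_powers (Suc m))"
proof -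
  obtain i where i: "i \<le> m" "h = (\<lambda>x. x ^ 2 ^ i)" using assms by (auto simp: frobenius_powers_def)
  have mem: "(\<lambda>x::F. x ^ 2 ^ n) \<in> frobenius_powers (Suc m)" if "n \<le> Suc m" for n
    using that unfolding frobenius_powers_def by (intro image_eqI[where x=n]) auto
  have "(\<lambda>x::F. x ^ 2 ^ i) \<in> frobenius_powers (Suc m)" "(\<lambda>x::F. x ^ 2 ^ Suc i) \<in> frobenius_powers (Suc m)"
    using i(1) mem[of i] mem[of "Suc i"] by auto
  then show ?thesis
    unfolding i(2) frobenius_power_comp_phi
    by (intro fun_space.span_add fun_space.span_scale fun_space.span_base)
qed

lemma frobenius_powers2_comp_Psi:
  assumes "h \<in> frobenius_powers2 m"
  shows "h \<circ> Psi \<in> fun_space.span (frobenius_powers2 (Suc m))"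
proof -
  have base: "(\<lambda>x. x ^ 2 ^ i) \<circ> fst \<in> frobenius_powers2 (Suc m)"
    "(\<lambda>x. x ^ 2 ^ i) \<circ> snd \<in> frobenius_powers2 (Suc m)" if "i \<le> Suc m" for i
    using that unfolding frobenius_powers2_def frobenius_powers_def by (auto intro!: image_eqI[where x=i])
  obtain i where i: "i \<le> m" and "h = (\<lambda>x. x ^ 2 ^ i) \<circ> fst \<or> h = (\<lambda>x. x ^ 2 ^ i) \<circ> snd"
    using assms by (auto simp: frobenius_powers2_def frobenius_powers_def)
  then consider "h = (\<lambda>x. x ^ 2 ^ i) \<circ> fst" | "h = (\<lambda>x. x ^ 2 ^ i) \<circ> snd" by blast
  then show ?thesis
  proof cases
    case 1
    have eq: "h \<circ> Psi = scale_fun (tt ^ 2 ^ i) ((\<lambda>x. x ^ 2 ^ i) \<circ> fst) + ((\<lambda>x. x ^ 2 ^ Suc i) \<circ> fst)"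
      using frobenius_power_comp_phi[of i]
      by (simp add: 1 fun_eq_iff scale_fun_def Psi_def phi_def)
    show ?thesis
      unfolding eq using i by (intro fun_space.span_add fun_space.span_scale fun_space.span_base base) simp_all
  next
    case 2
    have eq: "h \<circ> Psi = scale_fun (tt ^ 2 ^ i) ((\<lambda>x. x ^ 2 ^ i) \<circ> snd)
        + scale_fun ((TT + tt) ^ 2 ^ i) ((\<lambda>x. x ^ 2 ^ Suc i) \<circ> fst) + ((\<lambda>x. x ^ 2 ^ Suc i) \<circ> snd)"
      by (simp add: 2 fun_eq_iff scale_fun_def Psi_def power_two_power_add_char2[OF two_eq_zero_F]
          power_mult_distrib power_mult[symmetric] mult.commute)
    show ?thesis
      unfolding eq using i by (intro fun_space.span_add fun_space.span_scale fun_space.span_base base) simp_all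
  qed
qed

lemma additive_poly_in_span_frobenius_powers:
  fixes p :: "F poly"
  assumes "additive (poly p)"
  shows "\<exists>m. poly p \<in> fun_space.span (frobenius_powers m)"
proof -
  obtain m a where "\<forall>x. poly p x = (\<Sum>i\<le>m. a i * x ^ 2 ^ i)"
    using additive_poly_char2_eq_sum_frobenius[OF two_eq_zero_F infinite_UNIV_F assms] by blast
  then have "poly p = (\<lambda>x. \<Sum>i\<le>m. a i * (\<lambda>i x. x ^ 2 ^ i) i x)" by (simp add: fun_eq_iff)
  also have "\<dots> \<in> fun_space.span (frobenius_powers m)"
    by (rule lincomb_in_span) (auto simp: frobenius_powers_def)
  finally show ?thesis by blast
qed

lemma poly_fun2_restrictions:
  assumes "poly_fun2 f"
  shows "\<exists>p q. (\<forall>x. f (x, 0) = poly p x) \<and> (\<forall>y. f (0, y) = poly q y)"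
proof -
  obtain c N where f: "\<forall>x y. f (x, y) = (\<Sum>i\<le>N. \<Sum>j\<le>N. c i j * x ^ i * y ^ j)"
    using assms by (auto simp: poly_fun2_def)
  have "f (x, 0) = poly (\<Sum>i\<le>N. monom (c i 0) i) x" for x
    using f by (simp add: poly_sum poly_monom sum.atMost_shift)
  moreover have "f (0, y) = poly (\<Sum>j\<le>N. monom (c 0 j) j) y" for y
    using f by (simp add: poly_sum poly_monom sum.atMost_shift)
  ultimately show ?thesis by blast
qed

lemma Hom_Ga_UNIV_in_span:
  assumes f: "f \<in> Hom_Ga UNIV"
  shows "\<exists>m. f \<in> fun_space.span (frobenius_powers2 m)"
proof -
  have add: "f (u + v) = f u + f v" for u v
    using f unfolding Hom_Ga_def by blast
  have "poly_fun2 f" using f by (simp add: Hom_Ga_def)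
  then obtain p q where p: "\<forall>x. f (x, 0) = poly p x" and q: "\<forall>y. f (0, y) = poly q y"
    using poly_fun2_restrictions by blast
  have "additive (poly p)" "additive (poly q)"
    using add[of "(_, 0)" "(_, 0)"] add[of "(0, _)" "(0, _)"] p q by (unfold_locales; simp)+
  then obtain m1 m2 where "poly p \<in> fun_space.span (frobenius_powers m1)"
    "poly q \<in> fun_space.span (frobenius_powers m2)"
    using additive_poly_in_span_frobenius_powers by blast
  then have "poly p \<in> fun_space.span (frobenius_powers (max m1 m2))"
    "poly q \<in> fun_space.span (frobenius_powers (max m1 m2))"
    using fun_space.span_mono[OF monoD[OF mono_frobenius_powers]]
    by (meson max.cobounded1 max.cobounded2 subsetD)+
  moreover have "h \<circ> fst \<in> fun_space.span (frobenius_powers2 m)"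
    "h \<circ> snd \<in> fun_space.span (frobenius_powers2 m)" if "h \<in> frobenius_powers m" for h m
    using that by (auto simp: frobenius_powers2_def intro: fun_space.span_base)
  ultimately have "poly p \<circ> fst \<in> fun_space.span (frobenius_powers2 (max m1 m2))"
    "poly q \<circ> snd \<in> fun_space.span (frobenius_powers2 (max m1 m2))"
    by (blast intro: span_comp_right)+
  moreover have "f = (poly p \<circ> fst) + (poly q \<circ> snd)"
  proof
    fix z :: "F \<times> F"
    have "f z = f (fst z, 0) + f (0, snd z)"
      using add[of "(fst z, 0)" "(0, snd z)"] by simp
    then show "f z = ((poly p \<circ> fst) + (poly q \<circ> snd)) z" using p q by simp
  qed
  ultimately show ?thesis by (metis fun_space.span_add)
qed

lemma Hom_Ga_zero_times_in_span:
  assumes f: "f \<in> Hom_Ga ({0} \<times> UNIV)"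
  shows "\<exists>m. f \<circ> Pair 0 \<in> fun_space.span (frobenius_powers m)"
proof -
  have "poly_fun2 f" using f by (simp add: Hom_Ga_def)
  then obtain q where q: "\<forall>y. f (0, y) = poly q y"
    using poly_fun2_restrictions by blast
  have "additive (poly q)"
    using f q by unfold_locales (auto simp: Hom_Ga_def dest!: bspec[of _ _ "(0, _)"])
  moreover have "f \<circ> Pair 0 = poly q" using q by (simp add: fun_eq_iff)
  ultimately show ?thesis using additive_poly_in_span_frobenius_powers by simp
qed

lemma tindep_Hom_Ga_UNIV_card_le:
  assumes "S \<subseteq> Hom_Ga UNIV" "finite S" "tindep UNIV Psi S"
  shows "card S \<le> 2"
proof (rule tindep_card_le[where j=id and G=frobenius_powers2])
  fix s assume "s \<in> S"
  then obtain m where "s \<in> fun_space.span (frobenius_powers2 m)"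
    using assms(1) Hom_Ga_UNIV_in_span by blast
  then show "\<exists>m. \<forall>k. s \<circ> (Psi ^^ k) \<circ> id \<in> fun_space.span (frobenius_powers2 (m + k))"
    using span_comp_funpow[where G=frobenius_powers2, OF frobenius_powers2_comp_Psi] by auto
qed (use assms finite_frobenius_powers2 card_frobenius_powers2 mono_frobenius_powers2 in auto)

lemma range_Pair_zero: "range (Pair 0) = {0} \<times> UNIV"
  by auto

lemma tindep_Hom_Ga_zero_times_card_le:
  assumes "S \<subseteq> Hom_Ga ({0} \<times> UNIV)" "finite S" "tindep ({0} \<times> UNIV) Psi S"
  shows "card S \<le> 1"
proof (rule tindep_card_le[where j="Pair 0" and G=frobenius_powers])
  show "tindep (range (Pair 0)) Psi S"
    using assms(3) by (simp add: range_Pair_zero)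
  fix s assume "s \<in> S"
  then obtain m where "s \<circ> Pair 0 \<in> fun_space.span (frobenius_powers m)"
    using assms(1) Hom_Ga_zero_times_in_span by blast
  moreover have "s \<circ> (Psi ^^ k) \<circ> Pair 0 = (s \<circ> Pair 0) \<circ> (phi ^^ k)" for k
    by (simp add: fun_eq_iff funpow_Psi_zero_left)
  ultimately show "\<exists>m. \<forall>k. s \<circ> (Psi ^^ k) \<circ> Pair 0 \<in> fun_space.span (frobenius_powers (m + k))"
    using span_comp_funpow[where G=frobenius_powers, OF frobenius_powers_comp_phi] by metis
qed (use assms finite_frobenius_powers card_frobenius_powers mono_frobenius_powers in auto)

theorem proposition6:
  shows "has_trank UNIV Psi (Hom_Ga UNIV) 2
     \<and> Psi ` ({0} \<times> UNIV) \<subseteq> {0} \<times> UNIV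
     \<and> has_trank ({0} \<times> UNIV) Psi (Hom_Ga ({0} \<times> UNIV)) 1"
proof (intro conjI)
  show "has_trank UNIV Psi (Hom_Ga UNIV) 2"
    using fst_in_Hom_Ga snd_in_Hom_Ga fst_ne_snd tindep_fst_snd tindep_Hom_Ga_UNIV_card_le
    by (intro has_trankI[of "{fst, snd}"]) (auto simp: card_insert_if)
  show "Psi ` ({0} \<times> UNIV) \<subseteq> {0} \<times> UNIV"
    by (auto simp: Psi_def)
  show "has_trank ({0} \<times> UNIV) Psi (Hom_Ga ({0} \<times> UNIV)) 1"
    using snd_in_Hom_Ga tindep_snd tindep_Hom_Ga_zero_times_card_le
    by (intro has_trankI[of "{snd}"]) auto
qed

end
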